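(* Let $(X,\phi)$ be an acyclic convex geometry. Then $(X,\phi)$ is ranked if and only if its critical base is ranked.
   Context: All sets are finite. A closure operator $\phi$ on $X$ is extensive, monotone and idempotent on $2^X$. $(X,\phi)$ is standard if $\phi(\emptyset)=\emptyset$ and $\phi(\{x\})\setminus\{x\}$ is closed for each $x$. A unit implicational base $\Sigma$ (set of implications $A\to b$, $A\subseteq X$, $b\in X$) is an implicational base of $(X,\phi)$ if its closed sets (sets $S$ such that for each $A\to b\in\Sigma$, $A\not\subseteq S$ or $b\in S$) are exactly the closed sets of $\phi$. $\Sigma$ is acyclic if the directed graph on $X$ with arcs $x\to y$ whenever some $A\to y\in\Sigma$ has $x\in A$ has no directed cycle; irredundant if removing any implication changes the closed sets. An acyclic convex geometry is a standard closure space admitting an acyclic implicational base. $A$ is a minimal generator of $b$ if $b\in\phi(A)$ and $b\notin\phi(A\setminus\{x\})$ for all $x\in A$. An acyclic convex geometry admits a unique irredundant implicational base all of whose implications $A\to b$ have $A$ a minimal generator of $b$; it is called the critical base. A rank function on $\Sigma$ is a map $\rho:X\to\mathbb{N}$ such that $\rho(a)=\rho(b)+1$ whenever $A\to b\in\Sigma$ and $a\in A$; $\Sigma$ is ranked if it admits a rank function. A convex geometry is ranked if it admits a ranked implicational base. *)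

theory Defs
  imports Main
begin

text \<open>A unit implication A \<rightarrow> b is represented as a pair (A, b); a unit implicational
  base is a set of such pairs. The ground set X is an explicit finite carrier.\<close>

type_synonym 'a impl = "'a set \<times> 'a"

definition closure_operator :: "'a set \<Rightarrow> ('a set \<Rightarrow> 'a set) \<Rightarrow> bool" where
  "closure_operator X \<phi> \<longleftrightarrow>
     (\<forall>A. A \<subseteq> X \<longrightarrow> \<phi> A \<subseteq> X) \<and>
     (\<forall>A. A \<subseteq> X \<longrightarrow> A \<subseteq> \<phi> A) \<and>
     (\<forall>A B. A \<subseteq> B \<longrightarrow> B \<subseteq> X \<longrightarrow> \<phi> A \<subseteq> \<phi> B) \<and>
     (\<forall>A. A \<subseteq> X \<longrightarrow> \<phi> (\<phi> A) = \<phi> A)"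

definition closed_sets :: "'a set \<Rightarrow> ('a set \<Rightarrow> 'a set) \<Rightarrow> 'a set set" where
  "closed_sets X \<phi> = {S. S \<subseteq> X \<and> \<phi> S = S}"

definition standard :: "'a set \<Rightarrow> ('a set \<Rightarrow> 'a set) \<Rightarrow> bool" where
  "standard X \<phi> \<longleftrightarrow> closure_operator X \<phi> \<and> \<phi> {} = {} \<and>
     (\<forall>x\<in>X. \<phi> {x} - {x} \<in> closed_sets X \<phi>)"

definition impl_on :: "'a set \<Rightarrow> 'a impl set \<Rightarrow> bool" where
  "impl_on X \<Sigma> \<longleftrightarrow> (\<forall>(A, b)\<in>\<Sigma>. A \<subseteq> X \<and> b \<in> X)"

definition closed_sets_impl :: "'a set \<Rightarrow> 'a impl set \<Rightarrow> 'a set set" where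
  "closed_sets_impl X \<Sigma> = {S. S \<subseteq> X \<and> (\<forall>(A, b)\<in>\<Sigma>. \<not> A \<subseteq> S \<or> b \<in> S)}"

definition implicational_base :: "'a set \<Rightarrow> ('a set \<Rightarrow> 'a set) \<Rightarrow> 'a impl set \<Rightarrow> bool" where
  "implicational_base X \<phi> \<Sigma> \<longleftrightarrow> impl_on X \<Sigma> \<and> closed_sets_impl X \<Sigma> = closed_sets X \<phi>"

definition impl_graph :: "'a impl set \<Rightarrow> ('a \<times> 'a) set" where
  "impl_graph \<Sigma> = {(x, y). \<exists>A. (A, y) \<in> \<Sigma> \<and> x \<in> A}"

definition acyclic_base :: "'a impl set \<Rightarrow> bool" where
  "acyclic_base \<Sigma> \<longleftrightarrow> acyclic (impl_graph \<Sigma>)"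

definition irredundant :: "'a set \<Rightarrow> 'a impl set \<Rightarrow> bool" where
  "irredundant X \<Sigma> \<longleftrightarrow> (\<forall>i\<in>\<Sigma>. closed_sets_impl X (\<Sigma> - {i}) \<noteq> closed_sets_impl X \<Sigma>)"

definition minimal_generator :: "'a set \<Rightarrow> ('a set \<Rightarrow> 'a set) \<Rightarrow> 'a set \<Rightarrow> 'a \<Rightarrow> bool" where
  "minimal_generator X \<phi> A b \<longleftrightarrow> A \<subseteq> X \<and> b \<in> \<phi> A \<and> (\<forall>x\<in>A. b \<notin> \<phi> (A - {x}))"

definition acyclic_convex_geometry :: "'a set \<Rightarrow> ('a set \<Rightarrow> 'a set) \<Rightarrow> bool" where
  "acyclic_convex_geometry X \<phi> \<longleftrightarrow> finite X \<and> standard X \<phi> \<and>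
     (\<exists>\<Sigma>. implicational_base X \<phi> \<Sigma> \<and> acyclic_base \<Sigma>)"

definition is_critical_base :: "'a set \<Rightarrow> ('a set \<Rightarrow> 'a set) \<Rightarrow> 'a impl set \<Rightarrow> bool" where
  "is_critical_base X \<phi> \<Sigma> \<longleftrightarrow> implicational_base X \<phi> \<Sigma> \<and> irredundant X \<Sigma> \<and>
     (\<forall>(A, b)\<in>\<Sigma>. minimal_generator X \<phi> A b)"

text \<open>The critical base: the unique irredundant base whose premises are minimal generators
  (uniqueness for acyclic convex geometries is a result of the paper).\<close>
definition critical_base :: "'a set \<Rightarrow> ('a set \<Rightarrow> 'a set) \<Rightarrow> 'a impl set" where
  "critical_base X \<phi> = (THE \<Sigma>. is_critical_base X \<phi> \<Sigma>)"

definition rank_function :: "'a impl set \<Rightarrow> ('a \<Rightarrow> nat) \<Rightarrow> bool" where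
  "rank_function \<Sigma> \<rho> \<longleftrightarrow> (\<forall>(A, b)\<in>\<Sigma>. \<forall>a\<in>A. \<rho> a = \<rho> b + 1)"

definition ranked_base :: "'a impl set \<Rightarrow> bool" where
  "ranked_base \<Sigma> \<longleftrightarrow> (\<exists>\<rho>. rank_function \<Sigma> \<rho>)"

definition ranked_geometry :: "'a set \<Rightarrow> ('a set \<Rightarrow> 'a set) \<Rightarrow> bool" where
  "ranked_geometry X \<phi> \<longleftrightarrow> (\<exists>\<Sigma>. implicational_base X \<phi> \<Sigma> \<and> ranked_base \<Sigma>)"

end

theory Submission
  imports Defs
begin

(* Fix an acyclic base \<Sigma>0 and call x an ancestor of y if x precedes y in the transitive closure
  of the implication graph of \<Sigma>0. Say that A \<rightarrow> b is critical if A is a minimal generator of b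
  with b \<notin> A and every C \<subseteq> \<phi> A - {b} generating b also generates A. For critical A \<rightarrow> b
  and an arbitrary base \<Sigma>, the set \<phi> A - {b} contains A but not b, so some D \<rightarrow> y of \<Sigma> with
  D \<subseteq> \<phi> A - {b} has y \<notin> \<phi> A - {b}; then y = b, criticality gives A \<subseteq> \<phi> D, and since
  (by acyclicity) a minimal generator lies inside every set equivalent to it, A \<subseteq> D.
  The implications of the critical base are exactly the critical ones, so a rank function
  of any base is a rank function of the critical base. *)

definition closed_under :: "'a impl set \<Rightarrow> 'a set \<Rightarrow> bool" where
  "closed_under \<Sigma> S \<longleftrightarrow> (\<forall>(D, y)\<in>\<Sigma>. D \<subseteq> S \<longrightarrow> y \<in> S)"

lemma closed_underD: "closed_under \<Sigma> S \<Longrightarrow> (D, y) \<in> \<Sigma> \<Longrightarrow> D \<subseteq> S \<Longrightarrow> y \<in> S"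
  unfolding closed_under_def by blast

lemma closed_underI: "(\<And>D y. (D, y) \<in> \<Sigma> \<Longrightarrow> D \<subseteq> S \<Longrightarrow> y \<in> S) \<Longrightarrow> closed_under \<Sigma> S"
  unfolding closed_under_def by blast

lemma closed_sets_impl_eq: "closed_sets_impl X \<Sigma> = {S. S \<subseteq> X \<and> closed_under \<Sigma> S}"
  unfolding closed_sets_impl_def closed_under_def by auto

lemma implicational_base_iff_closed_under:
  "implicational_base X \<phi> \<Sigma> \<longleftrightarrow> impl_on X \<Sigma> \<and> (\<forall>S\<subseteq>X. closed_under \<Sigma> S \<longleftrightarrow> \<phi> S = S)"
  unfolding implicational_base_def closed_sets_impl_eq closed_sets_def by (auto simp: set_eq_iff)

lemma irredundant_nontrivial:
  assumes "irredundant X \<Sigma>" and "(A, b) \<in> \<Sigma>"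
  shows "b \<notin> A"
proof
  assume "b \<in> A"
  then have "closed_sets_impl X (\<Sigma> - {(A, b)}) = closed_sets_impl X \<Sigma>"
    unfolding closed_sets_impl_def by auto
  with assms show False
    unfolding irredundant_def by blast
qed

lemma irredundant_separating_set:
  assumes "irredundant X \<Sigma>" and "(A, b) \<in> \<Sigma>"
  obtains S where "S \<subseteq> X" "closed_under (\<Sigma> - {(A, b)}) S" "A \<subseteq> S" "b \<notin> S"
proof -
  have "closed_sets_impl X \<Sigma> \<subseteq> closed_sets_impl X (\<Sigma> - {(A, b)})"
    unfolding closed_sets_impl_eq closed_under_def by blast
  moreover have "closed_sets_impl X (\<Sigma> - {(A, b)}) \<noteq> closed_sets_impl X \<Sigma>"
    using assms unfolding irredundant_def by blast
  ultimately obtain S where S: "S \<subseteq> X" "closed_under (\<Sigma> - {(A, b)}) S" "\<not> closed_under \<Sigma> S"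
    unfolding closed_sets_impl_eq by blast
  then have "A \<subseteq> S \<and> b \<notin> S"
    unfolding closed_under_def by blast
  with S that show ?thesis
    by blast
qed

locale closure_space =
  fixes X :: "'a set" and \<phi> :: "'a set \<Rightarrow> 'a set"
  assumes closure_operator: "closure_operator X \<phi>"
begin

lemma closure_subset: "A \<subseteq> X \<Longrightarrow> \<phi> A \<subseteq> X"
  using closure_operator unfolding closure_operator_def by simp

lemma closure_extensive: "A \<subseteq> X \<Longrightarrow> A \<subseteq> \<phi> A"
  using closure_operator unfolding closure_operator_def by simp

lemma closure_mono: "A \<subseteq> B \<Longrightarrow> B \<subseteq> X \<Longrightarrow> \<phi> A \<subseteq> \<phi> B"
  using closure_operator unfolding closure_operator_def by blast

lemma closure_idem: "A \<subseteq> X \<Longrightarrow> \<phi> (\<phi> A) = \<phi> A"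
  using closure_operator unfolding closure_operator_def by simp

lemma closure_least: "A \<subseteq> S \<Longrightarrow> S \<subseteq> X \<Longrightarrow> \<phi> S = S \<Longrightarrow> \<phi> A \<subseteq> S"
  using closure_mono[of A S] by simp

lemma closure_mono_closure: "A \<subseteq> \<phi> B \<Longrightarrow> B \<subseteq> X \<Longrightarrow> \<phi> A \<subseteq> \<phi> B"
  using closure_mono[of A "\<phi> B"] closure_idem[of B] closure_subset[of B] by simp

lemma base_mem_subset:
  assumes "implicational_base X \<phi> \<Sigma>" and "(D, y) \<in> \<Sigma>"
  shows "D \<subseteq> X" "y \<in> X"
  using assms unfolding implicational_base_def impl_on_def by auto

lemma base_closed_under_iff:
  "implicational_base X \<phi> \<Sigma> \<Longrightarrow> S \<subseteq> X \<Longrightarrow> closed_under \<Sigma> S \<longleftrightarrow> \<phi> S = S"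
  unfolding implicational_base_iff_closed_under by simp

lemma base_sound:
  assumes base: "implicational_base X \<phi> \<Sigma>" and Dy: "(D, y) \<in> \<Sigma>"
  shows "y \<in> \<phi> D"
proof -
  have D: "D \<subseteq> X"
    using base_mem_subset[OF base Dy] by simp
  then have "closed_under \<Sigma> (\<phi> D)"
    using base_closed_under_iff[OF base closure_subset] closure_idem by simp
  with Dy closure_extensive[OF D] show ?thesis
    by (simp add: closed_underD)
qed

lemma base_closure_least:
  assumes "implicational_base X \<phi> \<Sigma>" "S \<subseteq> X" "closed_under \<Sigma> S" "A \<subseteq> S"
  shows "\<phi> A \<subseteq> S"
  using closure_least[of A S] base_closed_under_iff[of \<Sigma> S] assms by simp

lemma minimal_generator_subset: "minimal_generator X \<phi> A b \<Longrightarrow> A \<subseteq> X"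
  unfolding minimal_generator_def by blast

lemma minimal_generator_generates: "minimal_generator X \<phi> A b \<Longrightarrow> b \<in> \<phi> A"
  unfolding minimal_generator_def by blast

lemma minimal_generator_mem: "minimal_generator X \<phi> A b \<Longrightarrow> b \<in> X"
  using closure_subset[OF minimal_generator_subset] minimal_generator_generates by (rule subsetD)

lemma minimal_generator_minimal:
  assumes mg: "minimal_generator X \<phi> C b" and "A \<subseteq> C" and "b \<in> \<phi> A"
  shows "A = C"
proof (rule ccontr)
  assume "A \<noteq> C"
  with \<open>A \<subseteq> C\<close> obtain x where x: "x \<in> C" "A \<subseteq> C - {x}"
    by blast
  moreover have "C - {x} \<subseteq> X"
    using minimal_generator_subset[OF mg] by blast
  ultimately have "b \<in> \<phi> (C - {x})"
    using closure_mono[of A "C - {x}"] \<open>b \<in> \<phi> A\<close> by blast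
  with mg x show False
    unfolding minimal_generator_def by blast
qed

lemma minimal_generator_exists:
  assumes "finite S" "S \<subseteq> X" "b \<in> \<phi> S"
  obtains A where "A \<subseteq> S" "minimal_generator X \<phi> A b"
proof -
  obtain A where A: "A \<subseteq> S" "b \<in> \<phi> A"
    and min: "\<forall>B. B \<subseteq> S \<and> b \<in> \<phi> B \<longrightarrow> B \<subseteq> A \<longrightarrow> A = B"
    using finite_has_minimal2[of "{A. A \<subseteq> S \<and> b \<in> \<phi> A}" S] assms by auto
  have "b \<notin> \<phi> (A - {x})" if "x \<in> A" for x
    using min[rule_format, of "A - {x}"] A(1) that by blast
  with A assms(2) have "minimal_generator X \<phi> A b"
    unfolding minimal_generator_def by blast
  with A that show ?thesis
    by blast
qed

definition nontrivial_minimal_generators :: "'a impl set" where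
  "nontrivial_minimal_generators = {(A, b). minimal_generator X \<phi> A b \<and> b \<notin> A}"

lemma base_nontrivial_minimal_generators:
  assumes "finite X"
  shows "implicational_base X \<phi> nontrivial_minimal_generators"
  unfolding implicational_base_iff_closed_under
proof (intro conjI allI impI)
  show "impl_on X nontrivial_minimal_generators"
    unfolding impl_on_def nontrivial_minimal_generators_def
    by (auto dest: minimal_generator_subset minimal_generator_mem)
  fix S assume S: "S \<subseteq> X"
  show "closed_under nontrivial_minimal_generators S \<longleftrightarrow> \<phi> S = S"
  proof
    assume closed: "closed_under nontrivial_minimal_generators S"
    have "b \<in> S" if "b \<in> \<phi> S" for b
    proof -
      obtain A where "A \<subseteq> S" "minimal_generator X \<phi> A b"
        using minimal_generator_exists[OF finite_subset[OF S assms] S \<open>b \<in> \<phi> S\<close>] by blast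
      then show "b \<in> S"
        using closed_underD[OF closed, of A b] unfolding nontrivial_minimal_generators_def by auto
    qed
    then show "\<phi> S = S"
      using closure_extensive[OF S] by auto
  next
    assume closed: "\<phi> S = S"
    have "b \<in> S" if "minimal_generator X \<phi> A b" "A \<subseteq> S" for A b
      using closure_mono[of A S] minimal_generator_generates[OF that(1)] that(2) S closed by auto
    then show "closed_under nontrivial_minimal_generators S"
      unfolding closed_under_def nontrivial_minimal_generators_def by auto
  qed
qed

lemma critical_base_exists:
  assumes "finite X"
  shows "\<exists>\<Sigma>. is_critical_base X \<phi> \<Sigma>"
proof -
  let ?M = nontrivial_minimal_generators
  have "?M \<subseteq> Pow X \<times> X"
    unfolding nontrivial_minimal_generators_def
    using minimal_generator_subset minimal_generator_mem by blast
  then have "finite ?M"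
    using assms by (meson finite_Pow_iff finite_SigmaI finite_subset)
  then obtain \<Sigma> where \<Sigma>: "\<Sigma> \<subseteq> ?M" "implicational_base X \<phi> \<Sigma>"
    and min: "\<forall>\<Sigma>'. \<Sigma>' \<subseteq> ?M \<and> implicational_base X \<phi> \<Sigma>' \<longrightarrow> \<Sigma>' \<subseteq> \<Sigma> \<longrightarrow> \<Sigma> = \<Sigma>'"
    using finite_has_minimal2[of "{\<Sigma>. \<Sigma> \<subseteq> ?M \<and> implicational_base X \<phi> \<Sigma>}" ?M]
      base_nontrivial_minimal_generators[OF assms] by auto
  have "irredundant X \<Sigma>"
    unfolding irredundant_def
  proof (intro ballI notI)
    fix i assume "i \<in> \<Sigma>" and "closed_sets_impl X (\<Sigma> - {i}) = closed_sets_impl X \<Sigma>"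
    then have "implicational_base X \<phi> (\<Sigma> - {i})"
      using \<Sigma>(2) unfolding implicational_base_def impl_on_def by auto
    with min \<Sigma>(1) \<open>i \<in> \<Sigma>\<close> show False
      by blast
  qed
  with \<Sigma> show ?thesis
    unfolding is_critical_base_def nontrivial_minimal_generators_def by blast
qed

definition critical_implication :: "'a set \<Rightarrow> 'a \<Rightarrow> bool" where
  "critical_implication A b \<longleftrightarrow> minimal_generator X \<phi> A b \<and> b \<notin> A \<and>
     (\<forall>C. C \<subseteq> \<phi> A - {b} \<longrightarrow> b \<in> \<phi> C \<longrightarrow> A \<subseteq> \<phi> C)"

end

locale acyclic_closure_space = closure_space +
  fixes \<Sigma>0 :: "'a impl set"
  assumes base_\<Sigma>0: "implicational_base X \<phi> \<Sigma>0" and acyclic_\<Sigma>0: "acyclic_base \<Sigma>0"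
begin

definition ancestors :: "'a \<Rightarrow> 'a set" where
  "ancestors y = {x. (x, y) \<in> (impl_graph \<Sigma>0)\<^sup>+}"

lemma not_ancestor_self: "y \<notin> ancestors y"
  using acyclic_\<Sigma>0 unfolding acyclic_base_def acyclic_def ancestors_def by simp

lemma ancestors_trans: "x \<in> ancestors y \<Longrightarrow> ancestors x \<subseteq> ancestors y"
  unfolding ancestors_def by (auto intro: trancl_trans)

lemma base_premise_ancestors: "(C, y) \<in> \<Sigma>0 \<Longrightarrow> C \<subseteq> ancestors y"
  unfolding ancestors_def impl_graph_def by (auto intro: r_into_trancl)

(* The elements y derivable from their own ancestors in A form, together with A, a set closed
   under \<Sigma>0, because every premise of \<Sigma>0 consists of ancestors of its conclusion. *)
lemma closure_from_ancestors:
  assumes A: "A \<subseteq> X" and b: "b \<in> \<phi> A" "b \<notin> A"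
  shows "b \<in> \<phi> (A \<inter> ancestors b)"
proof -
  define T where "T = A \<union> {y \<in> X. y \<in> \<phi> (A \<inter> ancestors y)}"
  have T: "T \<subseteq> X"
    using A unfolding T_def by blast
  have "closed_under \<Sigma>0 T"
  proof (rule closed_underI)
    fix C y assume Cy: "(C, y) \<in> \<Sigma>0" and "C \<subseteq> T"
    have Ay: "A \<inter> ancestors y \<subseteq> X"
      using A by blast
    have "C \<subseteq> \<phi> (A \<inter> ancestors y)"
    proof
      fix c assume "c \<in> C"
      then have c: "c \<in> ancestors y"
        using base_premise_ancestors[OF Cy] by blast
      show "c \<in> \<phi> (A \<inter> ancestors y)"
      proof (cases "c \<in> A")
        case True
        with c closure_extensive[OF Ay] show ?thesis
          by blast
      next
        case False
        with \<open>c \<in> C\<close> \<open>C \<subseteq> T\<close> have "c \<in> \<phi> (A \<inter> ancestors c)"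
          unfolding T_def by blast
        moreover have "A \<inter> ancestors c \<subseteq> A \<inter> ancestors y"
          using ancestors_trans[OF c] by blast
        ultimately show ?thesis
          using closure_mono[OF _ Ay] by blast
      qed
    qed
    then have "y \<in> \<phi> (A \<inter> ancestors y)"
      using base_sound[OF base_\<Sigma>0 Cy] closure_mono_closure[OF _ Ay] by blast
    then show "y \<in> T"
      using base_mem_subset[OF base_\<Sigma>0 Cy] unfolding T_def by blast
  qed
  then have "\<phi> A \<subseteq> T"
    using base_closure_least[OF base_\<Sigma>0 T] unfolding T_def by blast
  with b show ?thesis
    unfolding T_def by blast
qed

lemma minimal_generator_subset_ancestors:
  assumes mg: "minimal_generator X \<phi> A b" and "b \<notin> A"
  shows "A \<subseteq> ancestors b"
proof
  fix a assume "a \<in> A"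
  have A: "A \<subseteq> X"
    using minimal_generator_subset[OF mg] .
  have b: "b \<in> \<phi> (A \<inter> ancestors b)"
    using closure_from_ancestors[OF A minimal_generator_generates[OF mg] \<open>b \<notin> A\<close>] .
  show "a \<in> ancestors b"
  proof (rule ccontr)
    assume "a \<notin> ancestors b"
    then have "A \<inter> ancestors b \<subseteq> A - {a}"
      by blast
    with b A have "b \<in> \<phi> (A - {a})"
      using closure_mono[of "A \<inter> ancestors b" "A - {a}"] by blast
    with mg \<open>a \<in> A\<close> show False
      unfolding minimal_generator_def by blast
  qed
qed

(* An element a \<in> A outside C would be derivable from its ancestors in C, which in turn are
   derivable from A - {a}; this contradicts the minimality of A. *)
lemma minimal_generator_subset_equivalent:
  assumes mg: "minimal_generator X \<phi> A b" and C: "C \<subseteq> X" "C \<subseteq> \<phi> A" "A \<subseteq> \<phi> C"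
  shows "A \<subseteq> C"
proof
  fix a assume a: "a \<in> A"
  have A: "A \<subseteq> X" and A': "A - {a} \<subseteq> X"
    using minimal_generator_subset[OF mg] by blast+
  show "a \<in> C"
  proof (rule ccontr)
    assume "a \<notin> C"
    then have a_from_C: "a \<in> \<phi> (C \<inter> ancestors a)"
      using closure_from_ancestors[OF C(1), of a] a C(3) by blast
    have "C \<inter> ancestors a \<subseteq> \<phi> (A - {a})"
    proof
      fix c assume c: "c \<in> C \<inter> ancestors a"
      then have "c \<noteq> a" and a_not: "a \<notin> ancestors c"
        using not_ancestor_self[of a] not_ancestor_self[of c] ancestors_trans[of a c] by blast+
      show "c \<in> \<phi> (A - {a})"
      proof (cases "c \<in> A")
        case True
        with \<open>c \<noteq> a\<close> closure_extensive[OF A'] show ?thesis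
          by blast
      next
        case False
        with c C(2) have "c \<in> \<phi> (A \<inter> ancestors c)"
          using closure_from_ancestors[OF A, of c] by blast
        moreover have "A \<inter> ancestors c \<subseteq> A - {a}"
          using a_not by blast
        ultimately show ?thesis
          using closure_mono[OF _ A'] by blast
      qed
    qed
    then have "a \<in> \<phi> (A - {a})"
      using a_from_C closure_mono_closure[OF _ A'] by blast
    then have "A \<subseteq> \<phi> (A - {a})"
      using closure_extensive[OF A'] by blast
    then have "b \<in> \<phi> (A - {a})"
      using closure_mono_closure[OF _ A'] minimal_generator_generates[OF mg] by blast
    with mg a show False
      unfolding minimal_generator_def by blast
  qed
qed

lemma base_covers_critical:
  assumes base: "implicational_base X \<phi> \<Sigma>" and crit: "critical_implication A b"
  obtains D where "(D, b) \<in> \<Sigma>" "A \<subseteq> D"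
proof -
  have mg: "minimal_generator X \<phi> A b" and "b \<notin> A"
    and recover: "\<And>C. C \<subseteq> \<phi> A - {b} \<Longrightarrow> b \<in> \<phi> C \<Longrightarrow> A \<subseteq> \<phi> C"
    using crit unfolding critical_implication_def by blast+
  have A: "A \<subseteq> X"
    using minimal_generator_subset[OF mg] .
  let ?S = "\<phi> A - {b}"
  have S: "?S \<subseteq> X"
    using closure_subset[OF A] by blast
  have "\<not> closed_under \<Sigma> ?S"
  proof
    assume "closed_under \<Sigma> ?S"
    moreover have "A \<subseteq> ?S"
      using closure_extensive[OF A] \<open>b \<notin> A\<close> by blast
    ultimately have "\<phi> A \<subseteq> ?S"
      using base_closure_least[OF base S] by blast
    then show False
      using minimal_generator_generates[OF mg] by blast
  qed
  then obtain D y where Dy: "(D, y) \<in> \<Sigma>" "D \<subseteq> ?S" "y \<notin> ?S"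
    unfolding closed_under_def by blast
  have D: "D \<subseteq> X"
    using base_mem_subset[OF base Dy(1)] by blast
  have y: "y \<in> \<phi> D"
    using base_sound[OF base Dy(1)] .
  then have "y \<in> \<phi> A"
    using closure_mono_closure[of D A] Dy(2) A by blast
  with Dy(3) have "y = b"
    by blast
  with y have "A \<subseteq> \<phi> D"
    using recover[OF Dy(2)] by blast
  then have "A \<subseteq> D"
    using minimal_generator_subset_equivalent[OF mg D] Dy(2) by blast
  with Dy(1) \<open>y = b\<close> that show ?thesis
    by blast
qed

lemma critical_implication_mem_base:
  assumes base: "implicational_base X \<phi> \<Sigma>"
    and mg: "\<forall>(D, y)\<in>\<Sigma>. minimal_generator X \<phi> D y" and crit: "critical_implication A b"
  shows "(A, b) \<in> \<Sigma>"
proof -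
  obtain D where D: "(D, b) \<in> \<Sigma>" "A \<subseteq> D"
    using base_covers_critical[OF base crit] .
  have "minimal_generator X \<phi> D b"
    using mg D(1) by blast
  moreover have "b \<in> \<phi> A"
    using crit minimal_generator_generates[of A b] unfolding critical_implication_def by blast
  ultimately have "A = D"
    using minimal_generator_minimal[of D b A] D(2) by blast
  with D(1) show ?thesis
    by simp
qed

lemma critical_base_premise_ancestors:
  assumes "is_critical_base X \<phi> \<Sigma>" and "(D, y) \<in> \<Sigma>"
  shows "D \<subseteq> ancestors y"
proof -
  have "minimal_generator X \<phi> D y" and "irredundant X \<Sigma>"
    using assms unfolding is_critical_base_def by auto
  then show ?thesis
    using minimal_generator_subset_ancestors irredundant_nontrivial[OF _ assms(2)] by blast
qed

(* Adding b and its descendants to a set that violates only A \<rightarrow> b yields a closed set,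
   because in a critical base premises consist of ancestors of conclusions. *)
lemma critical_base_separating_closure:
  assumes crit_base: "is_critical_base X \<phi> \<Sigma>"
    and S: "S \<subseteq> X" "closed_under (\<Sigma> - {(A, b)}) S" "A \<subseteq> S"
  shows "\<phi> A \<subseteq> S \<union> {y. y = b \<or> b \<in> ancestors y}"
proof -
  have base: "implicational_base X \<phi> \<Sigma>"
    using crit_base unfolding is_critical_base_def by blast
  define T where "T = S \<union> {y \<in> X. y = b \<or> b \<in> ancestors y}"
  have T: "T \<subseteq> X"
    using S(1) unfolding T_def by blast
  have "closed_under \<Sigma> T"
  proof (rule closed_underI)
    fix D y assume Dy: "(D, y) \<in> \<Sigma>" and "D \<subseteq> T"
    show "y \<in> T"
    proof (cases "y = b \<or> b \<in> ancestors y")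
      case True
      with base_mem_subset[OF base Dy] show ?thesis
        unfolding T_def by blast
    next
      case False
      have "D \<subseteq> S"
      proof
        fix d assume "d \<in> D"
        then have "d \<in> ancestors y"
          using critical_base_premise_ancestors[OF crit_base Dy] by blast
        then have "\<not> (d = b \<or> b \<in> ancestors d)"
          using False ancestors_trans[of d y] by blast
        with \<open>d \<in> D\<close> \<open>D \<subseteq> T\<close> show "d \<in> S"
          unfolding T_def by blast
      qed
      moreover have "(D, y) \<in> \<Sigma> - {(A, b)}"
        using Dy False by blast
      ultimately show ?thesis
        using closed_underD[OF S(2)] unfolding T_def by blast
    qed
  qed
  then have "\<phi> A \<subseteq> T"
    using base_closure_least[OF base T] S(3) unfolding T_def by blast
  then show ?thesis
    unfolding T_def by blast
qed

lemma critical_base_critical_implication: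
  assumes crit_base: "is_critical_base X \<phi> \<Sigma>" and Ab: "(A, b) \<in> \<Sigma>"
  shows "critical_implication A b"
proof -
  have base: "implicational_base X \<phi> \<Sigma>" and irr: "irredundant X \<Sigma>"
    and mg: "minimal_generator X \<phi> A b"
    using crit_base Ab unfolding is_critical_base_def by auto
  have A: "A \<subseteq> X"
    using minimal_generator_subset[OF mg] .
  obtain S where S: "S \<subseteq> X" "closed_under (\<Sigma> - {(A, b)}) S" "A \<subseteq> S" "b \<notin> S"
    using irredundant_separating_set[OF irr Ab] .
  have closure_A: "\<phi> A \<subseteq> S \<union> {y. y = b \<or> b \<in> ancestors y}"
    using critical_base_separating_closure[OF crit_base S(1-3)] .
  have "A \<subseteq> \<phi> C" if C: "C \<subseteq> \<phi> A - {b}" "b \<in> \<phi> C" for C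
  proof -
    let ?C = "C \<inter> ancestors b"
    have CX: "C \<subseteq> X" and C'X: "?C \<subseteq> X"
      using C(1) closure_subset[OF A] by blast+
    have b_C: "b \<in> \<phi> ?C"
      using closure_from_ancestors[OF CX C(2)] C(1) by blast
    have C_S: "?C \<subseteq> S"
    proof
      fix c assume c: "c \<in> ?C"
      then have "c \<noteq> b" and "b \<notin> ancestors c"
        using not_ancestor_self[of b] not_ancestor_self[of c] ancestors_trans[of b c] by blast+
      with c C(1) closure_A show "c \<in> S"
        by blast
    qed
    have "A \<subseteq> \<phi> ?C"
    proof (rule ccontr)
      assume A_not: "\<not> A \<subseteq> \<phi> ?C"
      (* A \<rightarrow> b is the only implication S may violate, and its premise is not in \<phi> ?C. *)
      have "closed_under \<Sigma> (\<phi> ?C \<inter> S)"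
      proof (rule closed_underI)
        fix D y assume Dy: "(D, y) \<in> \<Sigma>" and D: "D \<subseteq> \<phi> ?C \<inter> S"
        have "y \<in> \<phi> ?C"
          using base_sound[OF base Dy] closure_mono_closure[OF _ C'X] D by blast
        moreover have "(D, y) \<in> \<Sigma> - {(A, b)}"
          using Dy A_not D by blast
        then have "y \<in> S"
          using closed_underD[OF S(2)] D by blast
        ultimately show "y \<in> \<phi> ?C \<inter> S"
          by blast
      qed
      moreover have "?C \<subseteq> \<phi> ?C \<inter> S"
        using closure_extensive[OF C'X] C_S by blast
      ultimately have "\<phi> ?C \<subseteq> \<phi> ?C \<inter> S"
        using base_closure_least[OF base] closure_subset[OF C'X] by blast
      with b_C S(4) show False
        by blast
    qed
    then show "A \<subseteq> \<phi> C"
      using closure_mono[of ?C C] CX by blast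
  qed
  with mg irredundant_nontrivial[OF irr Ab] show ?thesis
    unfolding critical_implication_def by blast
qed

lemma critical_base_unique:
  assumes "is_critical_base X \<phi> \<Sigma>1" and "is_critical_base X \<phi> \<Sigma>2"
  shows "\<Sigma>1 = \<Sigma>2"
proof -
  have "\<Sigma> \<subseteq> \<Sigma>'" if "is_critical_base X \<phi> \<Sigma>" "is_critical_base X \<phi> \<Sigma>'" for \<Sigma> \<Sigma>'
  proof
    fix i assume "i \<in> \<Sigma>"
    then obtain A b where Ab: "i = (A, b)" "(A, b) \<in> \<Sigma>"
      by (cases i) blast
    have "critical_implication A b"
      using critical_base_critical_implication[OF that(1) Ab(2)] .
    moreover have "implicational_base X \<phi> \<Sigma>'" "\<forall>(D, y)\<in>\<Sigma>'. minimal_generator X \<phi> D y"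
      using that(2) unfolding is_critical_base_def by auto
    ultimately show "i \<in> \<Sigma>'"
      using critical_implication_mem_base Ab(1) by blast
  qed
  with assms show ?thesis
    by blast
qed

lemma is_critical_base_critical_base:
  assumes "finite X"
  shows "is_critical_base X \<phi> (critical_base X \<phi>)"
proof -
  obtain \<Sigma> where \<Sigma>: "is_critical_base X \<phi> \<Sigma>"
    using critical_base_exists[OF assms] by blast
  then show ?thesis
    unfolding critical_base_def using critical_base_unique[OF _ \<Sigma>] by (rule theI)
qed

lemma rank_function_critical_base:
  assumes crit_base: "is_critical_base X \<phi> \<Sigma>c"
    and base: "implicational_base X \<phi> \<Sigma>" and rank: "rank_function \<Sigma> \<rho>"
  shows "rank_function \<Sigma>c \<rho>"
proof -
  have "\<rho> a = \<rho> b + 1" if Ab: "(A, b) \<in> \<Sigma>c" and a: "a \<in> A" for A b a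
  proof -
    obtain D where "(D, b) \<in> \<Sigma>" "A \<subseteq> D"
      using base_covers_critical[OF base critical_base_critical_implication[OF crit_base Ab]] .
    with a rank show ?thesis
      unfolding rank_function_def by blast
  qed
  then show ?thesis
    unfolding rank_function_def by blast
qed

end

theorem theorem2:
  fixes X :: "'a set" and \<phi> :: "'a set \<Rightarrow> 'a set"
  assumes "acyclic_convex_geometry X \<phi>"
  shows "ranked_geometry X \<phi> \<longleftrightarrow> ranked_base (critical_base X \<phi>)"
proof -
  obtain \<Sigma>0 where "finite X" "standard X \<phi>" "implicational_base X \<phi> \<Sigma>0" "acyclic_base \<Sigma>0"
    using assms unfolding acyclic_convex_geometry_def by blast
  then interpret acyclic_closure_space X \<phi> \<Sigma>0
    by unfold_locales (simp_all add: standard_def)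
  have crit_base: "is_critical_base X \<phi> (critical_base X \<phi>)"
    using is_critical_base_critical_base[OF \<open>finite X\<close>] .
  show ?thesis
  proof
    assume "ranked_geometry X \<phi>"
    then obtain \<Sigma> \<rho> where "implicational_base X \<phi> \<Sigma>" "rank_function \<Sigma> \<rho>"
      unfolding ranked_geometry_def ranked_base_def by blast
    with crit_base show "ranked_base (critical_base X \<phi>)"
      unfolding ranked_base_def using rank_function_critical_base by blast
  next
    assume "ranked_base (critical_base X \<phi>)"
    with crit_base show "ranked_geometry X \<phi>"
      unfolding ranked_geometry_def is_critical_base_def by blast
  qed
qed

end
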